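(* Let $p$ be an odd prime, let $m,k$ be integers with $0<k\le\lfloor m/2\rfloor$ and $m/\gcd(m,k)$ odd, and put $l=\gcd(m,k)$. Let $\alpha\in\mathbb{F}_{p^l}$, $\alpha\neq 0$, be a non-square in $\mathbb{F}_{p^m}$, and let $\sigma(x)=x^{p^r}$ with $0\le r\le\lfloor m/2\rfloor$. With $x\circ_k y=x^{p^k}y+y^{p^k}x$, define on $\mathbb{F}_{p^m}^2$ the presemifield multiplication $(a,b)*(c,d)=(a\circ_k c+\alpha\,\sigma(b\circ_k d),\ ad+bc)$, let $L(a,b)=(a,b)*(1,0)=(a+a^{p^k},b)$ (an additive bijection of $\mathbb{F}_{p^m}^2$), and let $\mathbb{S}_{k,\sigma}=(\mathbb{F}_{p^m}^2,+,\star)$ be the semifield with multiplication defined by $L(x)\star L(y)=x*y$. Then: (1) if $\sigma$ is the identity, the middle nucleus $N_m(\mathbb{S}_{k,\sigma})$ is isomorphic to $\mathbb{F}_{p^{2l}}$; (2) if $\sigma$ is not the identity, the middle nucleus $N_m(\mathbb{S}_{k,\sigma})$ is isomorphic to $\mathbb{F}_{p^l}$.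
   Context: The middle nucleus of a semifield $(\mathbb{S},+,\star)$ is $N_m(\mathbb{S})=\{a\in\mathbb{S}:(x\star a)\star y=x\star(a\star y)\text{ for all }x,y\in\mathbb{S}\}$; it is a finite field under the semifield operations. The multiplication $*$ defines a presemifield (distributive, no zero divisors), and $\star$ defines a (commutative) semifield with identity $L(1,0)$. *)

theory Defs
  imports Main "HOL-Library.Product_Plus" "HOL-Library.Cardinality" "HOL-Computational_Algebra.Primes"
begin

definition circk :: "nat \<Rightarrow> nat \<Rightarrow> 'a::field \<Rightarrow> 'a \<Rightarrow> 'a" where
  "circk p k x y = x ^ (p ^ k) * y + y ^ (p ^ k) * x"

definition pmul :: "nat \<Rightarrow> nat \<Rightarrow> 'a::field \<Rightarrow> ('a \<Rightarrow> 'a) \<Rightarrow> 'a \<times> 'a \<Rightarrow> 'a \<times> 'a \<Rightarrow> 'a \<times> 'a" where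
  "pmul p k \<alpha> \<sigma> u v =
     (circk p k (fst u) (fst v) + \<alpha> * \<sigma> (circk p k (snd u) (snd v)),
      fst u * snd v + snd u * fst v)"

definition Lmap :: "nat \<Rightarrow> nat \<Rightarrow> 'a::field \<Rightarrow> ('a \<Rightarrow> 'a) \<Rightarrow> 'a \<times> 'a \<Rightarrow> 'a \<times> 'a" where
  "Lmap p k \<alpha> \<sigma> u = pmul p k \<alpha> \<sigma> u (1, 0)"

definition smul :: "nat \<Rightarrow> nat \<Rightarrow> 'a::field \<Rightarrow> ('a \<Rightarrow> 'a) \<Rightarrow> 'a \<times> 'a \<Rightarrow> 'a \<times> 'a \<Rightarrow> 'a \<times> 'a" where
  "smul p k \<alpha> \<sigma> u v =
     pmul p k \<alpha> \<sigma> (inv (Lmap p k \<alpha> \<sigma>) u) (inv (Lmap p k \<alpha> \<sigma>) v)"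

definition middle_nucleus :: "('s \<Rightarrow> 's \<Rightarrow> 's) \<Rightarrow> 's set" where
  "middle_nucleus mul = {a. \<forall>x y. mul (mul x a) y = mul x (mul a y)}"

definition iso_onto_field :: "'s::plus set \<Rightarrow> ('s \<Rightarrow> 's \<Rightarrow> 's) \<Rightarrow> ('s \<Rightarrow> 'b::field) \<Rightarrow> bool" where
  "iso_onto_field S mul f \<longleftrightarrow> bij_betw f S UNIV \<and>
     (\<forall>x\<in>S. \<forall>y\<in>S. f (x + y) = f x + f y \<and> f (mul x y) = f x * f y)"

end

theory Submission
  imports Defs "HOL-Algebra.Algebraic_Closure_Type" "HOL-Number_Theory.Residues"
begin

hide_const (open) Divisibility.prime
unbundle no m_inv_syntax

text \<open>
  The semifield product is the presemifield product transported along the additive bijection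
  \<open>L(a, b) = (a^q + a, b)\<close>, \<open>q = p^k\<close>. Testing middle associativity of \<open>L(u, v)\<close> against
  \<open>(s, 0)\<close>, \<open>(0, s)\<close> and \<open>(0, 1)\<close> forces \<open>u^q = u\<close>, and \<open>v^q = v\<close> if \<open>\<sigma> = id\<close>; if \<open>\<sigma> \<noteq> id\<close>
  the resulting identity in \<open>s\<close> is a polynomial of degree \<open>p^(k+r) < p^m\<close> vanishing everywhere,
  which forces \<open>v = 0\<close>. Conversely all these elements lie in the nucleus, and there the product
  is that of \<open>GF(p^l)(\<surd>\<alpha>)\<close> in the coordinates \<open>(u, v)\<close>. As \<open>\<alpha>\<close> is a non-square in \<open>GF(p^l)\<close>,
  this is a field with \<open>p^(2l)\<close> resp. \<open>p^l\<close> elements. An isomorphism onto a given field of that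
  size sends a primitive element of \<open>GF(p^l)\<close> to a root of its minimal polynomial, which exists
  because the minimal polynomial divides \<open>X^(p^l) - X\<close>.
\<close>

section \<open>Finite fields\<close>

lemma finite_field_generator:
  obtains g :: "'a::{field,finite}"
  where "\<And>x. x \<noteq> 0 \<Longrightarrow> \<exists>i. x = g ^ i" and "\<And>n. g ^ n = 1 \<longleftrightarrow> (CARD('a) - 1) dvd n"
proof -
  define R where "R = (ring_of_type_algebra :: 'a ring)"
  have R_simps: "carrier R = UNIV" "\<zero>\<^bsub>R\<^esub> = 0" "\<one>\<^bsub>R\<^esub> = 1" "x \<otimes>\<^bsub>R\<^esub> y = x * y" for x y :: 'a
    by (simp_all add: R_def ring_of_type_algebra_def)
  interpret R: field R unfolding R_def by (rule field_from_type_algebra)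
  let ?G = "Multiplicative_Group.mult_of R"
  interpret G: group ?G by (rule R.field_mult_group)
  have carrier: "carrier ?G = UNIV - {0}" by (simp add: R_simps)
  have pow_R: "a [^]\<^bsub>R\<^esub> i = a ^ i" for a :: 'a and i :: nat
    by (induction i) (simp_all add: R_simps)
  have pow: "a [^]\<^bsub>?G\<^esub> i = a ^ i" for a :: 'a and i :: nat
    by (simp add: Multiplicative_Group.nat_pow_mult_of pow_R)
  have fin: "finite (carrier ?G)" by (simp add: carrier)
  obtain a where a: "a \<in> carrier ?G" and gen: "carrier ?G = {a ^ i | i::nat. i \<in> UNIV}"
    using R.finite_field_mult_group_has_gen fin
    by (auto simp: Multiplicative_Group.nat_pow_mult_of pow_R R_simps)
  have "G.ord a = card (generate ?G {a})" by (rule G.generate_pow_card[OF a])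
  also have "generate ?G {a} = carrier ?G"
    using G.generate_pow_nat[OF a] G.ord_ge_1[OF fin a] gen pow by simp
  also have "card (carrier ?G) = CARD('a) - 1"
    by (simp add: R_simps card_Diff_singleton)
  finally have ord: "G.ord a = CARD('a) - 1" .
  show thesis
  proof
    show "\<exists>i. x = a ^ i" if "x \<noteq> 0" for x
      using that gen carrier by auto
    show "a ^ n = 1 \<longleftrightarrow> (CARD('a) - 1) dvd n" for n
      using G.pow_eq_id[OF a, of n] ord pow by (simp add: R_simps)
  qed
qed

lemma finite_field_card_ge_2: "2 \<le> CARD('a::{field,finite})"
  using card_mono[of UNIV "{0, 1 :: 'a}"] by simp

lemma finite_field_power_card_minus_one:
  fixes x :: "'a::{field,finite}"
  assumes "x \<noteq> 0"
  shows "x ^ (CARD('a) - 1) = 1"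
proof -
  obtain g :: 'a where gen: "\<And>x. x \<noteq> 0 \<Longrightarrow> \<exists>i. x = g ^ i"
    and ord: "\<And>n. g ^ n = 1 \<longleftrightarrow> (CARD('a) - 1) dvd n"
    using finite_field_generator[where 'a = 'a] by blast
  obtain i where "x = g ^ i" using gen assms by blast
  then show ?thesis using ord[of "i * (CARD('a) - 1)"] by (simp add: power_mult)
qed

text \<open>\<open>finite_field_power_card_eq_same\<close> of the library needs the class \<open>finite_field\<close>.\<close>
lemma finite_field_power_card:
  fixes x :: "'a::{field,finite}"
  shows "x ^ CARD('a) = x"
proof (cases "x = 0")
  case False
  have "CARD('a) = Suc (CARD('a) - 1)" using finite_field_card_ge_2[where 'a='a] by simp
  then show ?thesis using finite_field_power_card_minus_one[OF False] by (metis power_Suc2 mult_1)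
qed (use finite_field_card_ge_2[where 'a='a] in simp)

lemma CHAR_finite_field:
  assumes "prime p" and "CARD('a::{field,finite}) = p ^ m"
  shows "CHAR('a) = p"
proof -
  have "prime CHAR('a)" by (rule prime_CHAR_semidom) (simp add: finite_imp_CHAR_pos)
  moreover have "CHAR('a) dvd p ^ m" using CHAR_dvd_CARD[where 'a='a] assms(2) by simp
  ultimately show ?thesis using assms(1) by (metis prime_dvd_power primes_dvd_imp_eq)
qed

lemma finite_field_powers_inj:
  fixes g :: "'a::{field,finite}"
  assumes ord: "\<And>n. g ^ n = 1 \<longleftrightarrow> (CARD('a) - 1) dvd n"
  shows "inj_on (\<lambda>i. g ^ i) {..<CARD('a) - 1}"
proof (rule linorder_inj_onI')
  fix i j assume ij: "i \<in> {..<CARD('a) - 1}" "j \<in> {..<CARD('a) - 1}" "i < j"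
  have "g \<noteq> 0" using ord[of "CARD('a) - 1"] finite_field_card_ge_2[where 'a='a] by (auto simp: power_0_left)
  show "g ^ i \<noteq> g ^ j"
  proof
    assume "g ^ i = g ^ j"
    then have "g ^ i * g ^ (j - i) = g ^ i * 1" using \<open>i < j\<close>
      by (metis le_add_diff_inverse less_imp_le mult_1_right power_add)
    then have "(CARD('a) - 1) dvd (j - i)" using ord \<open>g \<noteq> 0\<close> by simp
    then show False using ij by (auto dest: dvd_imp_le)
  qed
qed

lemma finite_field_roots_of_unity:
  fixes g :: "'a::{field,finite}"
  assumes gen: "\<And>x. x \<noteq> 0 \<Longrightarrow> \<exists>i. x = g ^ i"
    and ord: "\<And>n. g ^ n = 1 \<longleftrightarrow> (CARD('a) - 1) dvd n"
    and card: "CARD('a) - 1 = d * N"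
  shows "{x. x ^ d = 1} = (\<lambda>j. (g ^ N) ^ j) ` {..<d}" and "card {x::'a. x ^ d = 1} = d"
proof -
  have "0 < N" "0 < d" using card finite_field_card_ge_2[where 'a='a] by (auto intro!: Nat.gr0I)
  have root: "((g ^ N) ^ j) ^ d = 1" for j
  proof -
    have "g ^ (N * j * d) = 1" using ord card by simp
    then show ?thesis by (simp add: power_mult)
  qed
  have "x \<in> (\<lambda>j. (g ^ N) ^ j) ` {..<d}" if "x ^ d = 1" for x
  proof -
    have "x \<noteq> 0" using that \<open>0 < d\<close> by (auto simp: power_0_left)
    then obtain i where i: "x = g ^ i" using gen by blast
    then have "g ^ (d * i) = 1" using that by (metis mult.commute power_mult)
    then have "(d * N) dvd (d * i)" using ord card by (simp add: mult.commute)
    then obtain j where j: "i = N * j" using \<open>0 < d\<close> by (auto simp: nat_mult_dvd_cancel1)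
    have "x = (g ^ N) ^ (d * (j div d) + j mod d)" using i j by (simp add: power_mult)
    also have "\<dots> = ((g ^ N) ^ d) ^ (j div d) * (g ^ N) ^ (j mod d)"
      by (simp only: power_add power_mult)
    also have "\<dots> = (g ^ N) ^ (j mod d)" using root[of 1] by simp
    finally show ?thesis using \<open>0 < d\<close> by simp
  qed
  then show roots: "{x. x ^ d = 1} = (\<lambda>j. (g ^ N) ^ j) ` {..<d}" using root by auto
  have "(*) N ` {..<d} \<subseteq> {..<CARD('a) - 1}" using card \<open>0 < N\<close> by auto
  then have "inj_on (\<lambda>i. g ^ i) ((*) N ` {..<d})"
    by (rule inj_on_subset[OF finite_field_powers_inj[OF ord]])
  moreover have "inj_on ((*) N) {..<d}" using \<open>0 < N\<close> by (simp add: inj_on_def)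
  ultimately have "inj_on (\<lambda>j. g ^ (N * j)) {..<d}" using comp_inj_on by (fastforce simp: o_def)
  then show "card {x::'a. x ^ d = 1} = d" unfolding roots by (simp add: card_image power_mult)
qed

lemma pow_eq_self_iff:
  fixes x :: "'a::idom"
  assumes "0 < Q"
  shows "x ^ Q = x \<longleftrightarrow> x = 0 \<or> x ^ (Q - 1) = 1"
proof -
  have "x ^ Q = x ^ (Q - 1) * x" using assms by (simp flip: power_Suc2)
  then show ?thesis using assms by (auto simp: power_0_left)
qed

lemma diff_one_dvd_power_diff_one: "(x - 1) dvd (x ^ n - 1)" for x :: nat
proof (cases "x = 0")
  case False
  show ?thesis
  proof (induction n)
    case (Suc n)
    have "x ^ Suc n - 1 = x * (x ^ n - 1) + (x - 1)"
      using False by (simp add: algebra_simps diff_mult_distrib2 Suc_le_eq)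
    then show ?case using Suc by simp
  qed simp
qed (simp add: power_0_left)

lemma finite_field_card_pow_eq_self:
  assumes "1 < Q" and "(Q - 1) dvd (CARD('a::{field,finite}) - 1)"
  shows "card {x::'a. x ^ Q = x} = Q"
proof -
  obtain g :: 'a where gen: "\<And>x. x \<noteq> 0 \<Longrightarrow> \<exists>i. x = g ^ i"
    and ord: "\<And>n. g ^ n = 1 \<longleftrightarrow> (CARD('a) - 1) dvd n"
    using finite_field_generator[where 'a = 'a] by blast
  obtain N where "CARD('a) - 1 = (Q - 1) * N" using assms(2) by blast
  then have "card {x::'a. x ^ (Q - 1) = 1} = Q - 1" using finite_field_roots_of_unity(2)[OF gen ord] by blast
  moreover have "{x::'a. x ^ Q = x} = insert 0 {x. x ^ (Q - 1) = 1}"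
    using assms(1) by (auto simp: pow_eq_self_iff)
  moreover have "0 \<notin> {x::'a. x ^ (Q - 1) = 1}" using assms(1) by (simp add: power_0_left)
  ultimately show ?thesis using assms(1) by simp
qed

lemma poly_eq_0_if_vanishes:
  fixes P :: "'a::{idom,finite} poly"
  assumes "\<And>x. poly P x = 0" and "degree P < CARD('a)"
  shows "P = 0"
  using card_poly_roots_bound[of P] assms by fastforce

lemma finite_field_exists_pow_ne_self:
  assumes "1 < Q" and "Q < CARD('a)"
  obtains s :: "'a::{field,finite}" where "s ^ Q \<noteq> s"
proof -
  define P :: "'a poly" where "P = monom 1 Q - monom 1 1"
  have "coeff P Q = 1" using assms(1) by (simp add: P_def coeff_monom)
  moreover have "degree P \<le> Q"
    unfolding P_def using assms(1) by (intro degree_diff_le) (auto simp: degree_monom_eq)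
  ultimately have "\<not> (\<forall>s. poly P s = 0)" using poly_eq_0_if_vanishes[of P] assms(2) by fastforce
  then show thesis using that by (auto simp: P_def poly_monom)
qed

lemma finite_field_square_root:
  fixes y :: "'a::{field,finite}"
  assumes card: "CARD('a) = Q * Q" and "odd Q" and "y ^ Q = y"
  obtains \<beta> where "\<beta> ^ 2 = y"
proof (cases "y = 0")
  case False
  obtain g :: 'a where gen: "\<And>x. x \<noteq> 0 \<Longrightarrow> \<exists>i. x = g ^ i"
    and ord: "\<And>n. g ^ n = 1 \<longleftrightarrow> (CARD('a) - 1) dvd n"
    using finite_field_generator[where 'a = 'a] by blast
  have "0 < Q" using card finite_field_card_ge_2[where 'a='a] by (auto intro: Nat.gr0I)
  then have "CARD('a) - 1 = (Q - 1) * (Q + 1)" using card by (simp add: algebra_simps)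
  moreover have "y \<in> {x. x ^ (Q - 1) = 1}" using assms(3) False \<open>0 < Q\<close> by (simp add: pow_eq_self_iff)
  ultimately obtain j where y: "y = (g ^ (Q + 1)) ^ j"
    using finite_field_roots_of_unity(1)[OF gen ord] by blast
  obtain t where "Q + 1 = 2 * t" using \<open>odd Q\<close> by (metis odd_even_add odd_one evenE)
  then have "((g ^ t) ^ j) ^ 2 = y" unfolding y by (simp flip: power_mult add: mult_ac)
  then show thesis by (rule that)
qed (use that in \<open>simp add: power_0_left\<close>)

lemma bij_betw_UNIV_if_card_eq:
  fixes f :: "'a \<Rightarrow> 'b::finite"
  assumes "inj_on f A" and "card A = CARD('b)"
  shows "bij_betw f A UNIV"
proof -
  have "card (f ` A) = CARD('b)" using assms by (simp add: card_image)
  then have "f ` A = UNIV" by (intro card_subset_eq) auto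
  then show ?thesis using assms(1) by (simp add: bij_betw_def)
qed

section \<open>Frobenius maps\<close>

lemma frobenius_add:
  fixes x y :: "'a::comm_ring_1"
  assumes "prime p" and "CHAR('a) = p"
  shows "(x + y) ^ (p ^ n) = x ^ (p ^ n) + y ^ (p ^ n)"
  using freshmans_dream'[of "p ^ n" n x y] assms by simp

lemma frobenius_diff:
  fixes x y :: "'a::comm_ring_1"
  assumes "prime p" and "CHAR('a) = p"
  shows "(x - y) ^ (p ^ n) = x ^ (p ^ n) - y ^ (p ^ n)"
  using frobenius_add[OF assms, of "x - y" y n] by simp

lemma frobenius_minus:
  fixes x :: "'a::comm_ring_1"
  assumes "prime p" and "CHAR('a) = p"
  shows "(- x) ^ (p ^ n) = - (x ^ (p ^ n))"
  using frobenius_diff[OF assms, of 0 x n] prime_gt_0_nat[OF assms(1)] by (simp add: power_0_left)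

lemma pow_pow_fixed_dvd:
  fixes x :: "'a::monoid_mult"
  assumes "x ^ (p ^ a) = x" and "a dvd b"
  shows "x ^ (p ^ b) = x"
proof -
  obtain j where "b = a * j" using assms(2) by blast
  then show ?thesis
  proof (induction j arbitrary: b)
    case (Suc j)
    have "p ^ b = p ^ (a * j) * p ^ a" by (simp add: Suc.prems power_add)
    then have "x ^ (p ^ b) = (x ^ (p ^ (a * j))) ^ (p ^ a)" by (simp only: power_mult)
    then show ?case using Suc.IH assms(1) by simp
  qed simp
qed

lemma pow_pow_fixed_gcd:
  fixes x :: "'a::monoid_mult"
  assumes "x ^ (p ^ a) = x" and "x ^ (p ^ b) = x"
  shows "x ^ (p ^ gcd a b) = x"
  using assms
proof (induction a b rule: gcd_nat_induct)
  case (step a b)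
  have "x ^ (p ^ a) = (x ^ (p ^ (b * (a div b)))) ^ (p ^ (a mod b))"
    by (metis div_mult_mod_eq mult.commute power_add power_mult)
  then have "x ^ (p ^ (a mod b)) = x" using step.prems pow_pow_fixed_dvd[of x p b] by simp
  moreover have "gcd a b = gcd b (a mod b)" using step.hyps by (simp add: gcd_non_0_nat)
  ultimately show ?case using step by simp
qed simp

lemma gcd_double_eq:
  fixes m k :: nat
  assumes "odd (m div gcd m k)"
  shows "gcd (2 * k) m = gcd m k"
proof (cases "gcd m k = 0")
  case False
  obtain m' k' where m': "m = gcd m k * m'" and k': "k = gcd m k * k'"
    by (metis gcd_dvd1 gcd_dvd2 dvdE)
  have "gcd m k * gcd m' k' = gcd m k * 1"
    by (metis m' k' gcd_mult_distrib_nat mult.right_neutral)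
  then have "gcd m' k' = 1" using False by auto
  then have "coprime m' k'" by (simp add: coprime_iff_gcd_eq_1)
  moreover have "odd m'" using assms False m' by (metis nonzero_mult_div_cancel_left)
  ultimately have "coprime (2 * k') m'" by (simp add: coprime_commute)
  then have "gcd (2 * k') m' = 1" by simp
  then show ?thesis by (metis m' k' gcd_mult_distrib_nat mult.left_commute mult.right_neutral)
qed simp

section \<open>Embeddings of finite fields through integer polynomials\<close>

definition int_poly_eval :: "'a::comm_ring_1 \<Rightarrow> int poly \<Rightarrow> 'a" where
  "int_poly_eval x h = poly (map_poly of_int h) x"

lemma map_poly_of_int_add:
  "map_poly (of_int :: int \<Rightarrow> 'a::comm_ring_1) (f + g) = map_poly of_int f + map_poly of_int g"
  by (rule poly_eqI) (simp add: coeff_map_poly)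

lemma map_poly_of_int_diff:
  "map_poly (of_int :: int \<Rightarrow> 'a::comm_ring_1) (f - g) = map_poly of_int f - map_poly of_int g"
  by (rule poly_eqI) (simp add: coeff_map_poly)

lemma map_poly_of_int_mult:
  "map_poly (of_int :: int \<Rightarrow> 'a::comm_ring_1) (f * g) = map_poly of_int f * map_poly of_int g"
  by (rule poly_eqI) (simp add: coeff_map_poly coeff_mult of_int_sum)

lemma map_poly_of_int_smult:
  "map_poly (of_int :: int \<Rightarrow> 'a::comm_ring_1) (smult c f) = smult (of_int c) (map_poly of_int f)"
  by (rule poly_eqI) (simp add: coeff_map_poly)

lemma int_poly_eval_simps [simp]:
  "int_poly_eval x (f + g) = int_poly_eval x f + int_poly_eval x g"
  "int_poly_eval x (f - g) = int_poly_eval x f - int_poly_eval x g"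
  "int_poly_eval x (f * g) = int_poly_eval x f * int_poly_eval x g"
  "int_poly_eval x (smult c f) = of_int c * int_poly_eval x f"
  "int_poly_eval x (monom c n) = of_int c * x ^ n"
  "int_poly_eval x 0 = 0"
  "int_poly_eval x 1 = 1"
  by (simp_all add: int_poly_eval_def map_poly_of_int_add map_poly_of_int_diff
      map_poly_of_int_mult map_poly_of_int_smult map_poly_monom poly_monom)

lemma int_poly_eval_power [simp]: "int_poly_eval x (f ^ n) = int_poly_eval x f ^ n"
  by (induction n) simp_all

lemma int_poly_eval_degree_0: "degree f = 0 \<Longrightarrow> int_poly_eval x f = of_int (lead_coeff f)"
  by (metis degree_0_id int_poly_eval_simps(5) monom_0 mult_1_right power_0)

lemma of_int_eq_0_iff_of_int_eq_0:
  assumes "CHAR('a::ring_1) = CHAR('b::ring_1)"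
  shows "of_int n = (0::'a) \<longleftrightarrow> of_int n = (0::'b)"
  using assms by (simp add: of_int_eq_0_iff_char_dvd)

lemma map_poly_of_int_eq_0_iff:
  "map_poly of_int f = (0::'a::ring_1 poly) \<longleftrightarrow> (\<forall>i. of_int (coeff f i) = (0::'a))"
  by (auto simp: poly_eq_iff coeff_map_poly)

text \<open>Erasing the coefficients that vanish in \<open>'a\<close> makes the leading coefficient survive.\<close>
lemma int_poly_reduce_leading_coeff:
  assumes "map_poly of_int f \<noteq> (0::'a::ring_1 poly)"
  obtains g :: "int poly"
  where "map_poly of_int g = (map_poly of_int f :: 'a poly)" and "of_int (lead_coeff g) \<noteq> (0::'a)"
    and "degree g \<le> degree f"
proof
  define g where "g = map_poly (\<lambda>c. if of_int c = (0::'a) then 0 else c) f"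
  have coeff_g: "coeff g i = (if of_int (coeff f i) = (0::'a) then 0 else coeff f i)" for i
    by (simp add: g_def coeff_map_poly)
  show map_g: "map_poly of_int g = (map_poly of_int f :: 'a poly)"
    by (rule poly_eqI) (simp add: coeff_map_poly coeff_g)
  then have "g \<noteq> 0" using assms by auto
  then show "of_int (lead_coeff g) \<noteq> (0::'a)" by (metis coeff_g leading_coeff_0_iff)
  show "degree g \<le> degree f" unfolding g_def by (rule map_poly_degree_leq)
qed

text \<open>
  Integer polynomials stand in for polynomials over the prime field, which is not a type here:
  \<open>f\<close> represents the minimal polynomial of \<open>\<gamma>\<close> over the prime field of \<open>'c\<close>.
\<close>
lemma int_poly_minimal_annihilator:
  fixes \<gamma> :: "'c::field"
  assumes "int_poly_eval \<gamma> f0 = 0" and "of_int (lead_coeff f0) \<noteq> (0::'c)"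
  obtains f where "int_poly_eval \<gamma> f = 0" and "of_int (lead_coeff f) \<noteq> (0::'c)"
    and "\<And>h. int_poly_eval \<gamma> h = 0 \<Longrightarrow>
           \<exists>n q r. smult (lead_coeff f ^ n) h = f * q + r \<and> map_poly of_int r = (0::'c poly)"
proof -
  define P where "P h \<longleftrightarrow> int_poly_eval \<gamma> h = 0 \<and> of_int (lead_coeff h) \<noteq> (0::'c)" for h
  obtain f where "P f" and least: "\<And>h. P h \<Longrightarrow> degree f \<le> degree h"
    using ex_has_least_nat[of P f0 degree] assms unfolding P_def by blast
  then have f: "int_poly_eval \<gamma> f = 0" "of_int (lead_coeff f) \<noteq> (0::'c)" unfolding P_def by auto
  then have "f \<noteq> 0" by auto
  have "\<exists>n q r. smult (lead_coeff f ^ n) h = f * q + r \<and> map_poly of_int r = (0::'c poly)"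
    if h: "int_poly_eval \<gamma> h = 0" for h
  proof -
    obtain q r where qr: "pseudo_divmod h f = (q, r)" by fastforce
    have div: "smult (lead_coeff f ^ (Suc (degree h) - degree f)) h = f * q + r"
      using pseudo_divmod(1)[OF \<open>f \<noteq> 0\<close> qr] by simp
    have "map_poly of_int r = (0::'c poly)"
    proof (rule ccontr)
      assume "map_poly of_int r \<noteq> (0::'c poly)"
      then obtain r' where r': "map_poly of_int r' = (map_poly of_int r :: 'c poly)"
        "of_int (lead_coeff r') \<noteq> (0::'c)" "degree r' \<le> degree r"
        by (rule int_poly_reduce_leading_coeff)
      have "int_poly_eval \<gamma> r = 0" using arg_cong[OF div, of "int_poly_eval \<gamma>"] h f by simp
      then have "P r'" using r' unfolding P_def int_poly_eval_def by simp
      moreover have "r \<noteq> 0" using \<open>map_poly of_int r \<noteq> 0\<close> by auto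
      then have "degree r < degree f" using pseudo_divmod(2)[OF \<open>f \<noteq> 0\<close> qr] by simp
      ultimately show False using least[of r'] r'(3) by simp
    qed
    then show ?thesis using div by blast
  qed
  then show thesis using that f by blast
qed

lemma poly_factor_has_root:
  fixes F G :: "'a::idom poly"
  assumes "F * G \<noteq> 0" and "0 < degree F"
    and "degree (F * G) \<le> card {x. poly (F * G) x = 0}"
  shows "\<exists>x. poly F x = 0"
proof (rule ccontr)
  assume "\<nexists>x. poly F x = 0"
  then have "{x. poly (F * G) x = 0} = {x. poly G x = 0}" by auto
  moreover have "F \<noteq> 0" "G \<noteq> 0" using assms(1) by auto
  ultimately have "card {x. poly (F * G) x = 0} \<le> degree G" by (simp add: card_poly_roots_bound)
  moreover have "degree (F * G) = degree F + degree G" using \<open>F \<noteq> 0\<close> \<open>G \<noteq> 0\<close> by (rule degree_mult_eq)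
  ultimately show False using assms(2,3) by simp
qed

definition X_pow_minus_X :: "nat \<Rightarrow> int poly" where
  "X_pow_minus_X Q = monom 1 Q - monom 1 1"

lemma int_poly_eval_X_pow_minus_X [simp]: "int_poly_eval x (X_pow_minus_X Q) = x ^ Q - x"
  by (simp add: X_pow_minus_X_def)

lemma X_pow_minus_X:
  assumes "1 < Q"
  shows "degree (X_pow_minus_X Q) = Q" and "lead_coeff (X_pow_minus_X Q) = 1"
proof -
  have coeff: "coeff (X_pow_minus_X Q) Q = 1" using assms by (simp add: X_pow_minus_X_def coeff_monom)
  moreover have "degree (X_pow_minus_X Q) \<le> Q" unfolding X_pow_minus_X_def
    using assms by (intro degree_diff_le) (auto simp: degree_monom_eq)
  ultimately show deg: "degree (X_pow_minus_X Q) = Q" using le_degree[of "X_pow_minus_X Q" Q] by simp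
  show "lead_coeff (X_pow_minus_X Q) = 1" using coeff by (simp add: deg)
qed

lemma map_poly_of_int_eq_0_transfer:
  assumes "CHAR('a::ring_1) = CHAR('c::ring_1)" and "map_poly of_int r = (0::'c poly)"
  shows "map_poly of_int r = (0::'a poly)"
  using assms(2) by (simp add: map_poly_of_int_eq_0_iff of_int_eq_0_iff_of_int_eq_0[OF assms(1)])

text \<open>
  The annihilator \<open>f\<close> divides \<open>X^Q - X\<close> in characteristic \<open>CHAR('c)\<close>; if \<open>X^Q - X\<close> has \<open>Q\<close>
  roots in \<open>'a\<close>, so does \<open>f\<close>.
\<close>
lemma int_poly_annihilator_has_root:
  fixes \<gamma> :: "'c::field" and f :: "int poly"
  assumes char: "CHAR('a::field) = CHAR('c)" and "\<gamma> ^ Q = \<gamma>" and "1 < Q"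
    and roots: "Q \<le> card {x::'a. x ^ Q = x}"
    and f: "int_poly_eval \<gamma> f = 0" "of_int (lead_coeff f) \<noteq> (0::'c)"
    and divides: "\<And>h. int_poly_eval \<gamma> h = 0 \<Longrightarrow>
           \<exists>n q r. smult (lead_coeff f ^ n) h = f * q + r \<and> map_poly of_int r = (0::'c poly)"
  shows "\<exists>\<beta>::'a. int_poly_eval \<beta> f = 0"
proof -
  have lc_f: "of_int (lead_coeff f) \<noteq> (0::'a)" using f(2) by (simp add: of_int_eq_0_iff_of_int_eq_0[OF char])
  define F :: "'a poly" where "F = map_poly of_int f"
  have "degree f \<noteq> 0"
  proof
    assume "degree f = 0"
    then have "int_poly_eval \<gamma> f = of_int (lead_coeff f)" by (rule int_poly_eval_degree_0)
    then show False using f by simp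
  qed
  then have deg_F: "0 < degree F" unfolding F_def using lc_f by (simp add: map_poly_degree_eq)
  have h0: "int_poly_eval \<gamma> (X_pow_minus_X Q) = 0" using \<open>\<gamma> ^ Q = \<gamma>\<close> by simp
  obtain n q r where div: "smult (lead_coeff f ^ n) (X_pow_minus_X Q) = f * q + r"
    and r_c: "map_poly of_int r = (0::'c poly)"
    using divides[OF h0] by blast
  have r: "map_poly of_int r = (0::'a poly)" using map_poly_of_int_eq_0_transfer[OF char r_c] .
  define G :: "'a poly" where "G = map_poly of_int q"
  define c :: 'a where "c = of_int (lead_coeff f ^ n)"
  have "c \<noteq> 0" using lc_f by (simp add: c_def)
  have FG: "smult c (map_poly of_int (X_pow_minus_X Q)) = F * G"
    using arg_cong[OF div, of "map_poly (of_int :: int \<Rightarrow> 'a)"] r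
    by (simp add: c_def F_def G_def map_poly_of_int_smult map_poly_of_int_add map_poly_of_int_mult)
  have "degree (F * G) = Q"
    using \<open>c \<noteq> 0\<close> X_pow_minus_X[OF \<open>1 < Q\<close>] by (simp flip: FG add: map_poly_degree_eq)
  moreover have "poly (F * G) x = c * (x ^ Q - x)" for x
  proof -
    have "poly (map_poly of_int (X_pow_minus_X Q)) x = x ^ Q - x"
      using int_poly_eval_X_pow_minus_X[of x Q] unfolding int_poly_eval_def .
    then show ?thesis by (simp flip: FG)
  qed
  then have "{x. poly (F * G) x = 0} = {x::'a. x ^ Q = x}" using \<open>c \<noteq> 0\<close> by simp
  ultimately obtain \<beta> where "poly F \<beta> = 0"
    using poly_factor_has_root[of F G] deg_F roots \<open>1 < Q\<close> by force
  then show ?thesis by (auto simp: F_def int_poly_eval_def)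
qed

text \<open>A root \<open>\<beta>\<close> of the minimal annihilator of \<open>\<gamma>\<close> is a conjugate of \<open>\<gamma>\<close>.\<close>
lemma exists_conjugate_root:
  fixes \<gamma> :: "'c::field" and Q :: nat
  assumes char: "CHAR('a) = CHAR('c)" and "\<gamma> ^ Q = \<gamma>" and "1 < Q"
    and roots: "Q \<le> card {x::'a. x ^ Q = x}"
  obtains \<beta> :: "'a::field" where "\<And>h. int_poly_eval \<gamma> h = 0 \<Longrightarrow> int_poly_eval \<beta> h = 0"
proof -
  have "int_poly_eval \<gamma> (X_pow_minus_X Q) = 0" using \<open>\<gamma> ^ Q = \<gamma>\<close> by simp
  moreover have "of_int (lead_coeff (X_pow_minus_X Q)) \<noteq> (0::'c)"
    using X_pow_minus_X(2)[OF \<open>1 < Q\<close>] by simp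
  ultimately obtain f where f: "int_poly_eval \<gamma> f = 0" "of_int (lead_coeff f) \<noteq> (0::'c)"
    and divides: "\<And>h. int_poly_eval \<gamma> h = 0 \<Longrightarrow>
           \<exists>n q r. smult (lead_coeff f ^ n) h = f * q + r \<and> map_poly of_int r = (0::'c poly)"
    using int_poly_minimal_annihilator by blast
  obtain \<beta> :: 'a where \<beta>: "int_poly_eval \<beta> f = 0"
    using int_poly_annihilator_has_root[OF char \<open>\<gamma> ^ Q = \<gamma>\<close> \<open>1 < Q\<close> roots f divides] by blast
  show thesis
  proof (rule that)
    fix h assume "int_poly_eval \<gamma> h = 0"
    then obtain n q r where div: "smult (lead_coeff f ^ n) h = f * q + r"
      and r_c: "map_poly of_int r = (0::'c poly)"
      using divides by blast
    have "int_poly_eval \<beta> r = 0"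
      using map_poly_of_int_eq_0_transfer[OF char r_c] by (simp add: int_poly_eval_def)
    then have "of_int (lead_coeff f ^ n) * int_poly_eval \<beta> h = 0"
      using arg_cong[OF div, of "int_poly_eval \<beta>"] \<beta> by simp
    moreover have "of_int (lead_coeff f) \<noteq> (0::'a)"
      using f(2) by (simp add: of_int_eq_0_iff_of_int_eq_0[OF char])
    ultimately show "int_poly_eval \<beta> h = 0" by simp
  qed
qed

lemma int_poly_eval_embedding:
  fixes \<gamma> :: "'c::{field,finite}" and \<beta> :: "'a::field"
  assumes kernel: "\<And>h. int_poly_eval \<gamma> h = 0 \<Longrightarrow> int_poly_eval \<beta> h = 0"
  obtains \<phi> :: "'c \<Rightarrow> 'a"
  where "\<And>h. \<phi> (int_poly_eval \<gamma> h) = int_poly_eval \<beta> h" and "inj_on \<phi> (range (int_poly_eval \<gamma>))"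
proof
  define \<phi> where "\<phi> x = int_poly_eval \<beta> (SOME h. int_poly_eval \<gamma> h = x)" for x
  have well_defined: "int_poly_eval \<beta> h = int_poly_eval \<beta> h'"
    if "int_poly_eval \<gamma> h = int_poly_eval \<gamma> h'" for h h'
    using kernel[of "h - h'"] that by simp
  show \<phi>: "\<phi> (int_poly_eval \<gamma> h) = int_poly_eval \<beta> h" for h
    unfolding \<phi>_def by (rule well_defined) (rule someI_ex, blast)
  show "inj_on \<phi> (range (int_poly_eval \<gamma>))"
  proof (rule inj_onI, clarify)
    fix h h' assume eq: "\<phi> (int_poly_eval \<gamma> h) = \<phi> (int_poly_eval \<gamma> h')"
    define z where "z = int_poly_eval \<gamma> (h - h')"
    show "int_poly_eval \<gamma> h = int_poly_eval \<gamma> h'"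
    proof (rule ccontr)
      assume "int_poly_eval \<gamma> h \<noteq> int_poly_eval \<gamma> h'"
      then have "z \<noteq> 0" by (simp add: z_def)
      \<comment> \<open>the inverse of \<open>z\<close> is a power of \<open>z\<close>, hence again a value of \<open>int_poly_eval \<gamma>\<close>\<close>
      then have "z * z ^ (CARD('c) - 2) = 1"
        using finite_field_power_card_minus_one[of z] finite_field_card_ge_2[where 'a='c]
        by (metis Suc_diff_Suc power_Suc Suc_1 less_eq_Suc_le)
      then have "int_poly_eval \<gamma> ((h - h') * (h - h') ^ (CARD('c) - 2) - 1) = 0"
        by (simp add: z_def)
      then have "int_poly_eval \<beta> ((h - h') * (h - h') ^ (CARD('c) - 2) - 1) = 0"
        by (rule kernel)
      moreover have "int_poly_eval \<beta> (h - h') = 0" using eq by (simp add: \<phi>)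
      ultimately show False by simp
    qed
  qed
qed

lemma fixed_subfield_int_poly_generated:
  assumes "1 < Q" and "(Q - 1) dvd (CARD('a) - 1)"
  obtains \<gamma> :: "'a::{field,finite}"
  where "\<gamma> ^ Q = \<gamma>" and "{x. x ^ Q = x} \<subseteq> range (int_poly_eval \<gamma>)"
proof -
  obtain g :: 'a where gen: "\<And>x. x \<noteq> 0 \<Longrightarrow> \<exists>i. x = g ^ i"
    and ord: "\<And>n. g ^ n = 1 \<longleftrightarrow> (CARD('a) - 1) dvd n"
    using finite_field_generator[where 'a = 'a] by blast
  obtain N where N: "CARD('a) - 1 = (Q - 1) * N" using assms(2) by blast
  have fixed_iff: "x ^ Q = x \<longleftrightarrow> x = 0 \<or> x ^ (Q - 1) = 1" for x :: 'a
    using pow_eq_self_iff[of Q x] assms(1) by simp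
  have roots_of_unity: "{x. x ^ (Q - 1) = 1} = (\<lambda>j. (g ^ N) ^ j) ` {..<Q - 1}"
    using gen ord N by (rule finite_field_roots_of_unity(1))
  have "g ^ ((Q - 1) * N) = 1" using ord N by simp
  then have "(g ^ N) ^ Q = g ^ N" unfolding fixed_iff by (simp add: power_mult mult.commute)
  moreover have "x \<in> range (int_poly_eval (g ^ N))" if "x ^ Q = x" for x
  proof (cases "x = 0")
    case True
    then have "x = int_poly_eval (g ^ N) 0" by simp
    then show ?thesis by (rule range_eqI)
  next
    case False
    then have "x \<in> {x. x ^ (Q - 1) = 1}" using that unfolding fixed_iff by simp
    then have "x \<in> (\<lambda>j. (g ^ N) ^ j) ` {..<Q - 1}" unfolding roots_of_unity[symmetric] .
    then obtain j where "x = int_poly_eval (g ^ N) (monom 1 j)" by auto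
    then show ?thesis by (rule range_eqI)
  qed
  ultimately show thesis using that by blast
qed

lemma fixed_subfield_embedding:
  assumes char: "CHAR('a) = CHAR('b)" and "1 < Q"
    and dvd: "(Q - 1) dvd (CARD('a) - 1)" and roots: "Q \<le> card {y::'b. y ^ Q = y}"
  obtains \<phi> :: "'a::{field,finite} \<Rightarrow> 'b::field"
  where "inj_on \<phi> {x. x ^ Q = x}" and "\<phi> ` {x. x ^ Q = x} \<subseteq> {y. y ^ Q = y}"
    and "\<And>x y. x \<in> {x. x ^ Q = x} \<Longrightarrow> y \<in> {x. x ^ Q = x} \<Longrightarrow> \<phi> (x + y) = \<phi> x + \<phi> y"
    and "\<And>x y. x \<in> {x. x ^ Q = x} \<Longrightarrow> y \<in> {x. x ^ Q = x} \<Longrightarrow> \<phi> (x * y) = \<phi> x * \<phi> y"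
proof -
  obtain \<gamma> :: 'a where "\<gamma> ^ Q = \<gamma>" and in_range: "{x. x ^ Q = x} \<subseteq> range (int_poly_eval \<gamma>)"
    using fixed_subfield_int_poly_generated[OF \<open>1 < Q\<close> dvd] by blast
  obtain \<beta> :: 'b where "\<And>h. int_poly_eval \<gamma> h = 0 \<Longrightarrow> int_poly_eval \<beta> h = 0"
    using exists_conjugate_root[OF char[symmetric] \<open>\<gamma> ^ Q = \<gamma>\<close> \<open>1 < Q\<close> roots] by blast
  then obtain \<phi> :: "'a \<Rightarrow> 'b" where \<phi>: "\<And>h. \<phi> (int_poly_eval \<gamma> h) = int_poly_eval \<beta> h"
    and inj: "inj_on \<phi> (range (int_poly_eval \<gamma>))"
    using int_poly_eval_embedding[of \<gamma> \<beta>] by blast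
  show thesis
  proof
    show "inj_on \<phi> {x. x ^ Q = x}" using inj_on_subset[OF inj in_range] .
    fix x y :: 'a assume "x \<in> {x. x ^ Q = x}" "y \<in> {x. x ^ Q = x}"
    then obtain h h' where "x = int_poly_eval \<gamma> h" "y = int_poly_eval \<gamma> h'"
      using in_range by blast
    then show "\<phi> (x + y) = \<phi> x + \<phi> y" "\<phi> (x * y) = \<phi> x * \<phi> y"
      using \<phi>[of "h + h'"] \<phi>[of "h * h'"] by (simp_all add: \<phi>)
  next
    show "\<phi> ` {x. x ^ Q = x} \<subseteq> {y. y ^ Q = y}"
    proof clarify
      fix x :: 'a assume "x ^ Q = x"
      then obtain h where "x = int_poly_eval \<gamma> h" using in_range by blast
      then show "\<phi> x ^ Q = \<phi> x" using \<phi>[of "h ^ Q"] \<open>x ^ Q = x\<close> by (simp add: \<phi>)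
    qed
  qed
qed

section \<open>Middle nuclei of isotopes\<close>

lemma middle_nucleus_isotope:
  assumes "bij L"
  shows "middle_nucleus (\<lambda>u v. mul (inv L u) (inv L v)) =
         L ` {b. \<forall>x y. mul (inv L (mul x b)) y = mul x (inv L (mul b y))}" (is "_ = L ` ?B")
proof (rule Set.set_eqI)
  have inv_L: "inv L (L x) = x" "L (inv L u) = u" for x u
    using assms by (simp_all add: bij_is_inj bij_is_surj surj_f_inv_f)
  fix a
  have "a \<in> middle_nucleus (\<lambda>u v. mul (inv L u) (inv L v)) \<longleftrightarrow> inv L a \<in> ?B"
  proof
    assume "a \<in> middle_nucleus (\<lambda>u v. mul (inv L u) (inv L v))"
    then have assoc: "mul (inv L (mul (inv L u) (inv L a))) (inv L v)
        = mul (inv L u) (inv L (mul (inv L a) (inv L v)))" for u v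
      unfolding middle_nucleus_def by blast
    show "inv L a \<in> ?B"
    proof (intro CollectI allI)
      fix x y
      show "mul (inv L (mul x (inv L a))) y = mul x (inv L (mul (inv L a) y))"
        using assoc[of "L x" "L y"] by (simp only: inv_L)
    qed
  next
    assume "inv L a \<in> ?B"
    then show "a \<in> middle_nucleus (\<lambda>u v. mul (inv L u) (inv L v))"
      unfolding middle_nucleus_def by blast
  qed
  also have "\<dots> \<longleftrightarrow> a \<in> L ` ?B"
  proof
    assume "inv L a \<in> ?B"
    then have "L (inv L a) \<in> L ` ?B" by (rule imageI)
    then show "a \<in> L ` ?B" by (simp only: inv_L)
  next
    assume "a \<in> L ` ?B"
    then obtain b where "b \<in> ?B" "a = L b" by (rule imageE)
    then show "inv L a \<in> ?B" by (simp only: inv_L)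
  qed
  finally show "a \<in> middle_nucleus (\<lambda>u v. mul (inv L u) (inv L v)) \<longleftrightarrow> a \<in> L ` ?B" .
qed

text \<open>Coordinates of the product \<open>(x1 + x2 \<surd>a) (y1 + y2 \<surd>a)\<close>.\<close>
definition qmult :: "'a::comm_ring_1 \<Rightarrow> 'a \<times> 'a \<Rightarrow> 'a \<times> 'a \<Rightarrow> 'a \<times> 'a" where
  "qmult a x y = (fst x * fst y + a * snd x * snd y, fst x * snd y + snd x * fst y)"

lemma qmult_commute: "qmult a x y = qmult a y x"
  by (simp add: qmult_def algebra_simps)

lemma iso_onto_field_image:
  assumes "inj L" and "bij_betw f A UNIV"
    and "\<And>x y. L x + L y = L (x + y)"
    and "\<And>x y. x \<in> A \<Longrightarrow> y \<in> A \<Longrightarrow> mul (L x) (L y) = L (mul' x y)"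
    and "\<And>x y. x \<in> A \<Longrightarrow> y \<in> A \<Longrightarrow> f (x + y) = f x + f y"
    and "\<And>x y. x \<in> A \<Longrightarrow> y \<in> A \<Longrightarrow> f (mul' x y) = f x * f y"
  shows "iso_onto_field (L ` A) mul (f \<circ> inv L)"
  unfolding iso_onto_field_def
proof (intro conjI ballI)
  have "bij_betw (inv L) (L ` A) A"
    using bij_betw_inv_into_subset[OF inj_on_imp_bij_betw[OF assms(1)]] by blast
  then show "bij_betw (f \<circ> inv L) (L ` A) UNIV" using assms(2) by (rule bij_betw_trans)
next
  fix u v assume "u \<in> L ` A" "v \<in> L ` A"
  then obtain x y where "x \<in> A" "y \<in> A" "u = L x" "v = L y" by blast
  then show "(f \<circ> inv L) (u + v) = (f \<circ> inv L) u + (f \<circ> inv L) v"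
    and "(f \<circ> inv L) (mul u v) = (f \<circ> inv L) u * (f \<circ> inv L) v"
    using assms(1,3-6) by simp_all
qed

section \<open>The semifields \<open>S\<^sub>k\<^sub>,\<^sub>\<sigma>\<close>\<close>

locale semifield_Sk_sigma =
  fixes p m k r :: nat and \<alpha> :: "'a::{field,finite}"
  assumes prime_p: "prime p" and odd_p: "odd p" and card_a: "CARD('a) = p ^ m"
    and k_pos: "0 < k" and k_le: "k \<le> m div 2" and odd_quotient: "odd (m div gcd m k)"
    and \<alpha>_fixed: "\<alpha> ^ (p ^ gcd m k) = \<alpha>" and \<alpha>_nonzero: "\<alpha> \<noteq> 0"
    and \<alpha>_nonsquare: "\<not> (\<exists>y. \<alpha> = y ^ 2)" and r_le: "r \<le> m div 2"
begin

abbreviation "l \<equiv> gcd m k"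
abbreviation "q \<equiv> p ^ k"
abbreviation "\<sigma> \<equiv> \<lambda>x::'a. x ^ (p ^ r)"
abbreviation "K \<equiv> {x::'a. x ^ (p ^ l) = x}"
abbreviation "PM \<equiv> pmul p k \<alpha> \<sigma>"
abbreviation "L \<equiv> Lmap p k \<alpha> \<sigma>"
abbreviation "SM \<equiv> smul p k \<alpha> \<sigma>"

lemma CHAR_a: "CHAR('a) = p"
  using CHAR_finite_field[OF prime_p card_a] .

lemma p_gt_1: "1 < p"
  using prime_gt_1_nat[OF prime_p] .

lemma k_less_m: "k < m"
  using k_pos k_le by simp

lemma l_pos: "0 < l"
  using k_pos by simp

lemma fixed_k_iff: "x ^ q = x \<longleftrightarrow> x \<in> K"
proof
  assume "x ^ q = x"
  moreover have "x ^ (p ^ m) = x" using finite_field_power_card[of x] card_a by simp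
  ultimately show "x \<in> K" using pow_pow_fixed_gcd[of x p m k] by simp
qed (simp add: pow_pow_fixed_dvd)

lemma fixed_double_k: "x ^ (p ^ (2 * k)) = x \<Longrightarrow> x \<in> K"
  using pow_pow_fixed_gcd[of x p "2 * k" m] finite_field_power_card[of x] card_a
    gcd_double_eq[OF odd_quotient] by simp

lemma \<alpha>_fixed_k: "\<alpha> ^ q = \<alpha>"
  using \<alpha>_fixed fixed_k_iff by simp

lemma card_K_minus_one_dvd: "(p ^ l - 1) dvd (CARD('a) - 1)"
proof -
  have "(p ^ l - 1) dvd ((p ^ l) ^ (m div l) - 1)" by (rule diff_one_dvd_power_diff_one)
  then show ?thesis by (simp add: card_a flip: power_mult)
qed

lemma one_less_p_power_l: "1 < p ^ l"
  using one_less_power[OF p_gt_1 l_pos] .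

lemma card_K: "card K = p ^ l"
  using finite_field_card_pow_eq_self[OF one_less_p_power_l card_K_minus_one_dvd] .

definition W :: "'a \<Rightarrow> 'a" where
  "W z = z ^ q + z"

lemma W_diff: "W (x - y) = W x - W y"
  by (simp add: W_def frobenius_diff[OF prime_p CHAR_a])

lemma W_add: "W (x + y) = W x + W y"
  by (simp add: W_def frobenius_add[OF prime_p CHAR_a])

text \<open>A zero of \<open>W\<close> satisfies \<open>z ^ q = -z\<close>, so it is fixed by \<open>q\<^sup>2\<close> and hence by \<open>p ^ l\<close>; then \<open>2z = 0\<close>.\<close>
lemma W_eq_0_iff: "W z = 0 \<longleftrightarrow> z = 0"
proof
  assume "W z = 0"
  then have zq: "z ^ q = - z" by (simp add: W_def eq_neg_iff_add_eq_0)
  have "z ^ (p ^ (2 * k)) = (z ^ q) ^ q" by (simp add: power_mult mult_2 power_add)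
  also have "\<dots> = z" using zq frobenius_minus[OF prime_p CHAR_a] by simp
  finally have "z ^ q = z" using fixed_double_k fixed_k_iff by blast
  then have "2 * z = 0" using zq by simp
  moreover have "(2::'a) \<noteq> 0"
  proof
    assume "(2::'a) = 0"
    then have "p dvd 2" using of_nat_eq_0_iff_char_dvd[of 2, where 'a='a] CHAR_a by simp
    then have "p \<le> 2" by (rule dvd_imp_le) simp
    then have "p = 2" using p_gt_1 by linarith
    then show False using odd_p by simp
  qed
  ultimately show "z = 0" by simp
qed (use p_gt_1 in \<open>simp add: W_def power_0_left\<close>)

lemma bij_W: "bij W"
proof -
  have "inj W" by (rule injI) (metis W_diff W_eq_0_iff eq_iff_diff_eq_0)
  then show ?thesis by (simp add: bij_def finite_UNIV_inj_surj)
qed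

lemma L_eq: "L u = (W (fst u), snd u)"
  using p_gt_1 by (simp add: Lmap_def pmul_def circk_def W_def power_0_left)

lemma inv_W: "inv W (W x) = x" "W (inv W x) = x"
  using bij_W by (simp_all add: bij_is_inj bij_is_surj surj_f_inv_f)

lemma inv_L_eq: "inv L = (\<lambda>u. (inv W (fst u), snd u))"
  by (rule inv_equality) (simp_all add: L_eq inv_W)

lemma bij_L: "bij L"
  by (rule o_bij[of "\<lambda>u. (inv W (fst u), snd u)"]) (auto simp: L_eq inv_W)

lemma inv_L_L [simp]: "inv L (L x) = x"
  using bij_L by (simp add: bij_is_inj)

lemma L_add: "L x + L y = L (x + y)"
  by (simp add: L_eq W_add)

lemma SM_L: "SM (L x) (L y) = PM x y"
  by (simp add: smul_def)

lemma PM_commute: "PM x y = PM y x"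
  by (simp add: pmul_def circk_def algebra_simps)

lemma sigma_eq_id_iff: "\<sigma> = id \<longleftrightarrow> r = 0"
proof
  assume "\<sigma> = id"
  show "r = 0"
  proof (rule ccontr)
    assume "r \<noteq> 0"
    have "r < m" using r_le k_pos k_le by linarith
    have "1 < p ^ r" using one_less_power[OF p_gt_1] \<open>r \<noteq> 0\<close> by simp
    moreover have "p ^ r < CARD('a)" using \<open>r < m\<close> p_gt_1 card_a by simp
    ultimately obtain s :: 'a where "s ^ (p ^ r) \<noteq> s" by (rule finite_field_exists_pow_ne_self)
    then show False using \<open>\<sigma> = id\<close> by (metis id_apply)
  qed
qed (simp add: fun_eq_iff)

lemma zero_power_p_power [simp]: "(0::'a) ^ (p ^ n) = 0"
  using p_gt_1 by (simp add: power_0_left)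

lemma k_plus_r_less_m: "k + r < m"
proof (rule ccontr)
  assume "\<not> k + r < m"
  then have "m = 2 * k" using k_le r_le by linarith
  then show False using odd_quotient k_pos by simp
qed

lemma PM_nucleus_element:
  assumes "c \<in> K" "d \<in> K" "\<sigma> = id \<or> d = 0"
  shows "PM x (c, d) = L (qmult \<alpha> x (c, d))"
proof -
  have cq: "c ^ q = c" and dq: "d ^ q = d" using assms(1,2) fixed_k_iff by auto
  show ?thesis
  proof (cases "d = 0")
    case True
    then show ?thesis using cq
      by (simp add: pmul_def circk_def L_eq W_def qmult_def power_mult_distrib algebra_simps)
  next
    case False
    then have \<sigma>_id: "z ^ (p ^ r) = z" for z :: 'a using assms(3) by (metis id_apply)
    show ?thesis using cq dq \<alpha>_fixed_k unfolding L_eq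
      by (simp add: pmul_def circk_def W_def qmult_def \<sigma>_id frobenius_add[OF prime_p CHAR_a]
          power_mult_distrib algebra_simps)
  qed
qed

lemma PM_qmult_nucleus_element:
  assumes "c \<in> K" "d \<in> K" "\<sigma> = id \<or> d = 0"
  shows "PM (qmult \<alpha> x (c, d)) y = PM x (qmult \<alpha> (c, d) y)"
proof -
  have cq: "c ^ q = c" and dq: "d ^ q = d" using assms(1,2) fixed_k_iff by auto
  show ?thesis
  proof (cases "d = 0")
    case True
    then show ?thesis using cq
      by (simp add: pmul_def circk_def qmult_def power_mult_distrib algebra_simps)
  next
    case False
    then have \<sigma>_id: "z ^ (p ^ r) = z" for z :: 'a using assms(3) by (metis id_apply)
    show ?thesis using cq dq \<alpha>_fixed_k
      by (simp add: pmul_def circk_def qmult_def \<sigma>_id frobenius_add[OF prime_p CHAR_a]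
          power_mult_distrib algebra_simps)
  qed
qed

lemma nucleus_element_middle_assoc:
  assumes "c \<in> K" "d \<in> K" "\<sigma> = id \<or> d = 0"
  shows "PM (inv L (PM x (c, d))) y = PM x (inv L (PM (c, d) y))"
  using PM_qmult_nucleus_element[OF assms] PM_nucleus_element[OF assms]
  by (simp add: PM_commute[of "(c, d)"] qmult_commute[of \<alpha> "(c, d)"])

lemma middle_assoc_identities:
  assumes assoc: "\<And>x y. PM (inv L (PM x (u, v))) y = PM x (inv L (PM (u, v) y))"
  shows "W (s * u) = s ^ q * u + u ^ q * s"
    and "W (s * inv W (\<alpha> * \<sigma> (W v))) = \<alpha> * \<sigma> (s ^ q * v + v ^ q * s)"
proof -
  have "snd (PM (inv L (PM (s, 0) (u, v))) (0, 1)) = snd (PM (s, 0) (inv L (PM (u, v) (0, 1))))"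
    using assoc by simp
  then have "inv W (s ^ q * u + u ^ q * s) = s * u"
    by (simp add: pmul_def circk_def inv_L_eq)
  then show "W (s * u) = s ^ q * u + u ^ q * s" by (metis inv_W(2))
  have "snd (PM (inv L (PM (0, s) (u, v))) (0, 1)) = snd (PM (0, s) (inv L (PM (u, v) (0, 1))))"
    using assoc by simp
  then have "inv W (\<alpha> * \<sigma> (s ^ q * v + v ^ q * s)) = s * inv W (\<alpha> * \<sigma> (W v))"
    by (simp add: pmul_def circk_def inv_L_eq W_def)
  then show "W (s * inv W (\<alpha> * \<sigma> (W v))) = \<alpha> * \<sigma> (s ^ q * v + v ^ q * s)" by (metis inv_W(2))
qed

lemma exists_non_fixed_k:
  obtains s0 :: 'a where "s0 ^ q \<noteq> s0"
proof -
  have "1 < q" using one_less_power[OF p_gt_1 k_pos] .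
  moreover have "q < CARD('a)" using k_less_m p_gt_1 card_a by simp
  ultimately show thesis using that finite_field_exists_pow_ne_self by blast
qed

lemma middle_assoc_fst:
  assumes "\<And>x y. PM (inv L (PM x (u, v))) y = PM x (inv L (PM (u, v) y))"
  shows "u \<in> K"
proof -
  obtain s0 :: 'a where s0: "s0 ^ q \<noteq> s0" by (rule exists_non_fixed_k)
  have "s0 ^ q * u ^ q + s0 * u = s0 ^ q * u + u ^ q * s0"
    using middle_assoc_identities(1)[OF assms, of s0] by (simp add: W_def power_mult_distrib)
  then have "(s0 ^ q - s0) * (u ^ q - u) = 0" by (simp add: algebra_simps)
  then show "u \<in> K" using s0 fixed_k_iff by simp
qed

lemma middle_assoc_snd_if_sigma_id:
  assumes "\<sigma> = id" and assoc: "\<And>x y. PM (inv L (PM x (u, v))) y = PM x (inv L (PM (u, v) y))"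
  shows "v \<in> K"
proof -
  have \<sigma>_id: "z ^ (p ^ r) = z" for z :: 'a using assms(1) by (metis id_apply)
  define c where "c = inv W (\<alpha> * W v)"
  have E: "W (s * c) = \<alpha> * (s ^ q * v + v ^ q * s)" for s
    using middle_assoc_identities(2)[OF assoc, of s] by (simp add: c_def \<sigma>_id)
  obtain s0 :: 'a where s0: "s0 ^ q \<noteq> s0" by (rule exists_non_fixed_k)
  have W_c: "c ^ q + c = \<alpha> * v + \<alpha> * v ^ q" using E[of 1] by (simp add: W_def algebra_simps)
  have W_s0c: "s0 ^ q * c ^ q + s0 * c = \<alpha> * (s0 ^ q * v) + \<alpha> * (v ^ q * s0)"
    using E[of s0] by (simp add: W_def power_mult_distrib algebra_simps)
  have "(s0 ^ q - s0) * (c ^ q - \<alpha> * v)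
      = (s0 ^ q * c ^ q + s0 * c - (\<alpha> * (s0 ^ q * v) + \<alpha> * (v ^ q * s0)))
        - s0 * (c ^ q + c - (\<alpha> * v + \<alpha> * v ^ q))"
    by (simp add: algebra_simps)
  also have "\<dots> = 0" using W_c W_s0c by simp
  finally have cq: "c ^ q = \<alpha> * v" using s0 by simp
  then have "c = \<alpha> * v ^ q" using W_c by simp
  then have "\<alpha> * (v ^ q) ^ q = \<alpha> * v" using cq \<alpha>_fixed_k by (simp add: power_mult_distrib)
  then have "(v ^ q) ^ q = v" using \<alpha>_nonzero by simp
  then have "v ^ (p ^ (2 * k)) = v" by (simp add: power_mult mult_2 power_add)
  then show "v \<in> K" by (rule fixed_double_k)
qed

text \<open>
  For \<open>\<sigma> \<noteq> id\<close> the identity in \<open>s\<close> is a polynomial of degree \<open>p ^ (k + r) < CARD('a)\<close>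
  vanishing everywhere, whose leading coefficient is \<open>\<alpha> \<sigma>(v)\<close>.
\<close>
lemma middle_assoc_snd_if_sigma_not_id:
  assumes "\<sigma> \<noteq> id" and assoc: "\<And>x y. PM (inv L (PM x (u, v))) y = PM x (inv L (PM (u, v) y))"
  shows "v = 0"
proof -
  have "r \<noteq> 0" using assms(1) sigma_eq_id_iff by simp
  define c where "c = inv W (\<alpha> * \<sigma> (W v))"
  define e where "e = p ^ (k + r)"
  have frob_q: "(s ^ q) ^ (p ^ r) = s ^ e" for s :: 'a by (simp add: e_def power_mult power_add)
  define P :: "'a poly" where
    "P = monom (\<alpha> * v ^ (p ^ r)) e + monom (\<alpha> * v ^ e) (p ^ r) - monom (c ^ q) q - monom c 1"
  have "poly P s = 0" for s
  proof -
    have "s ^ q * c ^ q + s * c = \<alpha> * (s ^ e * v ^ (p ^ r) + v ^ e * s ^ (p ^ r))"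
      using middle_assoc_identities(2)[OF assoc, of s]
      by (simp add: c_def W_def frobenius_add[OF prime_p CHAR_a] power_mult_distrib frob_q)
    then show ?thesis by (simp add: P_def poly_monom algebra_simps)
  qed
  moreover have "degree P < CARD('a)"
  proof -
    have "p ^ r \<le> e" "q \<le> e" "1 \<le> e" using p_gt_1 by (simp_all add: e_def)
    then have "degree P \<le> e" unfolding P_def
      by (intro degree_diff_le degree_add_le) (auto intro: order_trans[OF degree_monom_le])
    moreover have "e < CARD('a)" using k_plus_r_less_m p_gt_1 card_a by (simp add: e_def)
    ultimately show ?thesis by simp
  qed
  ultimately have "P = 0" by (rule poly_eq_0_if_vanishes)
  have "e \<noteq> p ^ r" "e \<noteq> q" "e \<noteq> 1"
    using p_gt_1 k_pos \<open>r \<noteq> 0\<close> by (simp_all add: e_def power_inject_exp)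
  then have "coeff P e = \<alpha> * v ^ (p ^ r)" by (simp add: P_def coeff_monom)
  then have "\<alpha> * v ^ (p ^ r) = 0" using \<open>P = 0\<close> by simp
  then show "v = 0" using \<alpha>_nonzero p_gt_1 by simp
qed

lemma middle_nucleus_eq:
  "middle_nucleus SM = L ` {(c, d). c \<in> K \<and> d \<in> K \<and> (\<sigma> = id \<or> d = 0)}"
proof -
  have "SM = (\<lambda>u v. PM (inv L u) (inv L v))" by (intro ext) (simp add: smul_def)
  then have "middle_nucleus SM =
      L ` {b. \<forall>x y. PM (inv L (PM x b)) y = PM x (inv L (PM b y))}"
    using middle_nucleus_isotope[OF bij_L, of PM] by simp
  also have "{b. \<forall>x y. PM (inv L (PM x b)) y = PM x (inv L (PM b y))}
      = {(c, d). c \<in> K \<and> d \<in> K \<and> (\<sigma> = id \<or> d = 0)}" (is "?A = ?B")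
  proof (rule Set.set_eqI)
    fix b :: "'a \<times> 'a"
    obtain c d where b: "b = (c, d)" by fastforce
    show "b \<in> ?A \<longleftrightarrow> b \<in> ?B" unfolding b
      using middle_assoc_fst[of c d] middle_assoc_snd_if_sigma_id[of c d]
        middle_assoc_snd_if_sigma_not_id[of c d] nucleus_element_middle_assoc[of c d]
      by (cases "\<sigma> = id") auto
  qed
  finally show ?thesis .
qed

lemma SM_nucleus:
  assumes "z \<in> {(c, d). c \<in> K \<and> d \<in> K \<and> (\<sigma> = id \<or> d = 0)}"
  shows "SM (L x) (L z) = L (qmult \<alpha> x z)"
proof -
  obtain c d where z: "z = (c, d)" "c \<in> K" "d \<in> K" "\<sigma> = id \<or> d = 0" using assms by blast
  show ?thesis unfolding z(1) SM_L by (rule PM_nucleus_element[OF z(2-4)])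
qed

lemma K_embedding:
  assumes "CHAR('b) = p" and "p ^ l \<le> card {y::'b. y ^ (p ^ l) = y}"
  obtains \<phi> :: "'a \<Rightarrow> 'b::field" where "inj_on \<phi> K" and "\<phi> ` K \<subseteq> {y. y ^ (p ^ l) = y}"
    and "\<And>x y. x \<in> K \<Longrightarrow> y \<in> K \<Longrightarrow> \<phi> (x + y) = \<phi> x + \<phi> y"
    and "\<And>x y. x \<in> K \<Longrightarrow> y \<in> K \<Longrightarrow> \<phi> (x * y) = \<phi> x * \<phi> y"
proof -
  have "CHAR('a) = CHAR('b)" using CHAR_a assms(1) by simp
  then show thesis
    by (rule fixed_subfield_embedding[OF _ one_less_p_power_l card_K_minus_one_dvd assms(2)])
      (rule that)
qed

lemma middle_nucleus_iso_if_sigma_not_id: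
  assumes "\<sigma> \<noteq> id" and card_c: "CARD('c::{field,finite}) = p ^ l"
  shows "\<exists>g :: 'a \<times> 'a \<Rightarrow> 'c. iso_onto_field (middle_nucleus SM) SM g"
proof -
  have "CHAR('c) = p" using CHAR_finite_field[OF prime_p card_c] .
  moreover have "p ^ l \<le> card {y::'c. y ^ (p ^ l) = y}"
    using finite_field_power_card[where 'a='c] card_c by simp
  ultimately obtain \<phi> :: "'a \<Rightarrow> 'c" where inj: "inj_on \<phi> K"
    and "\<phi> ` K \<subseteq> {y. y ^ (p ^ l) = y}"
    and add: "\<And>x y. x \<in> K \<Longrightarrow> y \<in> K \<Longrightarrow> \<phi> (x + y) = \<phi> x + \<phi> y"
    and mult: "\<And>x y. x \<in> K \<Longrightarrow> y \<in> K \<Longrightarrow> \<phi> (x * y) = \<phi> x * \<phi> y"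
    by (rule K_embedding) (rule that)
  define A where "A = {(c, d). c \<in> K \<and> d \<in> K \<and> (\<sigma> = id \<or> d = 0)}"
  have A: "A = K \<times> {0}" using assms(1) by (auto simp: A_def)
  have "bij_betw (\<phi> \<circ> fst) A UNIV"
  proof (rule bij_betw_UNIV_if_card_eq)
    show "inj_on (\<phi> \<circ> fst) A" using inj by (auto simp: A inj_on_def)
    show "card A = CARD('c)" using card_K card_c by (simp add: A card_cartesian_product)
  qed
  then have "iso_onto_field (L ` A) SM (\<phi> \<circ> fst \<circ> inv L)"
  proof (rule iso_onto_field_image[OF bij_is_inj[OF bij_L], where mul' = "qmult \<alpha>"])
    fix x y assume "x \<in> A" "y \<in> A"
    then show "SM (L x) (L y) = L (qmult \<alpha> x y)" by (simp add: A_def SM_nucleus)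
    from \<open>x \<in> A\<close> \<open>y \<in> A\<close> show "(\<phi> \<circ> fst) (x + y) = (\<phi> \<circ> fst) x + (\<phi> \<circ> fst) y"
      and "(\<phi> \<circ> fst) (qmult \<alpha> x y) = (\<phi> \<circ> fst) x * (\<phi> \<circ> fst) y"
      by (auto simp: A qmult_def add mult)
  qed (rule L_add)
  then show ?thesis unfolding middle_nucleus_eq A_def[symmetric] by blast
qed

lemma card_fixed_quadratic_extension:
  assumes "CARD('b::{field,finite}) = p ^ (2 * l)"
  shows "card {y::'b. y ^ (p ^ l) = y} = p ^ l"
proof (rule finite_field_card_pow_eq_self[OF one_less_p_power_l])
  show "(p ^ l - 1) dvd (CARD('b) - 1)"
    using diff_one_dvd_power_diff_one[of "p ^ l" 2] assms by (simp add: power_mult mult.commute)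
qed

text \<open>\<open>\<beta>\<close> plays the role of \<open>\<surd>\<alpha>\<close>; it is not in \<open>\<phi> K\<close> because \<open>\<alpha>\<close> is a non-square in \<open>K\<close>.\<close>
lemma square_root_of_\<alpha>:
  fixes \<phi> :: "'a \<Rightarrow> 'b::{field,finite}"
  assumes card_b: "CARD('b) = p ^ (2 * l)"
    and inj: "inj_on \<phi> K" and into: "\<phi> ` K \<subseteq> {y::'b. y ^ (p ^ l) = y}"
    and mult: "\<And>x y. x \<in> K \<Longrightarrow> y \<in> K \<Longrightarrow> \<phi> (x * y) = \<phi> x * \<phi> y"
  obtains \<beta> where "\<beta> ^ 2 = \<phi> \<alpha>" and "\<beta> ^ (p ^ l) \<noteq> \<beta>"
proof -
  have "card (\<phi> ` K) = card {y::'b. y ^ (p ^ l) = y}"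
    using card_image[OF inj] card_K card_fixed_quadratic_extension[OF card_b] by simp
  then have image: "\<phi> ` K = {y. y ^ (p ^ l) = y}" using into by (intro card_subset_eq) simp_all
  have "CARD('b) = p ^ l * p ^ l" using card_b by (simp add: mult_2 power_add)
  moreover have "odd (p ^ l)" using odd_p by simp
  moreover have "\<phi> \<alpha> ^ (p ^ l) = \<phi> \<alpha>" using into \<alpha>_fixed by blast
  ultimately obtain \<beta> where \<beta>: "\<beta> ^ 2 = \<phi> \<alpha>" by (rule finite_field_square_root)
  have "\<beta> ^ (p ^ l) \<noteq> \<beta>"
  proof
    assume "\<beta> ^ (p ^ l) = \<beta>"
    then obtain s where s: "s \<in> K" "\<beta> = \<phi> s" using image by blast
    then have "\<phi> (s * s) = \<phi> \<alpha>" using \<beta> mult by (simp add: power2_eq_square)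
    then have "s * s = \<alpha>" using inj_onD[OF inj] s(1) \<alpha>_fixed by (simp add: power_mult_distrib)
    then show False using \<alpha>_nonsquare by (metis power2_eq_square)
  qed
  then show thesis using \<beta> that by blast
qed

lemma inj_on_K_adjoin:
  assumes "CHAR('b::field) = p" and inj: "inj_on \<phi> K" and into: "\<phi> ` K \<subseteq> {y::'b. y ^ (p ^ l) = y}"
    and outside: "\<beta> ^ (p ^ l) \<noteq> \<beta>"
  shows "inj_on (\<lambda>z. \<phi> (fst z) + \<phi> (snd z) * \<beta>) (K \<times> K)"
proof (rule inj_onI)
  fix x x' assume "x \<in> K \<times> K" "x' \<in> K \<times> K"
    and "\<phi> (fst x) + \<phi> (snd x) * \<beta> = \<phi> (fst x') + \<phi> (snd x') * \<beta>"
  then obtain c d c' d' where xx': "x = (c, d)" "x' = (c', d')"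
    and in_K: "c \<in> K" "d \<in> K" "c' \<in> K" "d' \<in> K"
    and eq: "\<phi> c + \<phi> d * \<beta> = \<phi> c' + \<phi> d' * \<beta>"
    by auto
  have \<phi>_fixed: "\<phi> z ^ (p ^ l) = \<phi> z" if "z \<in> K" for z using into that by blast
  have "\<phi> d = \<phi> d'"
  proof (rule ccontr)
    assume "\<phi> d \<noteq> \<phi> d'"
    have "(\<phi> d - \<phi> d') * \<beta> = \<phi> c' - \<phi> c" using eq by (simp add: algebra_simps)
    then have "\<beta> = (\<phi> c' - \<phi> c) / (\<phi> d - \<phi> d')"
      using \<open>\<phi> d \<noteq> \<phi> d'\<close> by (simp add: eq_divide_eq mult.commute)
    moreover have "(\<phi> c' - \<phi> c) ^ (p ^ l) = \<phi> c' - \<phi> c" "(\<phi> d - \<phi> d') ^ (p ^ l) = \<phi> d - \<phi> d'"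
      using in_K by (simp_all add: frobenius_diff[OF prime_p assms(1)] \<phi>_fixed)
    ultimately have "\<beta> ^ (p ^ l) = \<beta>" by (simp add: power_divide)
    then show False using outside by simp
  qed
  then show "x = x'" using xx' eq inj_onD[OF inj] in_K by auto
qed

lemma middle_nucleus_iso_if_sigma_id:
  assumes "\<sigma> = id" and card_b: "CARD('b::{field,finite}) = p ^ (2 * l)"
  shows "\<exists>f :: 'a \<times> 'a \<Rightarrow> 'b. iso_onto_field (middle_nucleus SM) SM f"
proof -
  have CHAR_b: "CHAR('b) = p" using CHAR_finite_field[OF prime_p card_b] .
  moreover have "p ^ l \<le> card {y::'b. y ^ (p ^ l) = y}"
    using card_fixed_quadratic_extension[OF card_b] by simp
  ultimately obtain \<phi> :: "'a \<Rightarrow> 'b" where inj: "inj_on \<phi> K"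
    and into: "\<phi> ` K \<subseteq> {y. y ^ (p ^ l) = y}"
    and add: "\<And>x y. x \<in> K \<Longrightarrow> y \<in> K \<Longrightarrow> \<phi> (x + y) = \<phi> x + \<phi> y"
    and mult: "\<And>x y. x \<in> K \<Longrightarrow> y \<in> K \<Longrightarrow> \<phi> (x * y) = \<phi> x * \<phi> y"
    by (rule K_embedding) (rule that)
  obtain \<beta> where \<beta>: "\<beta> ^ 2 = \<phi> \<alpha>" and \<beta>_outside: "\<beta> ^ (p ^ l) \<noteq> \<beta>"
    using square_root_of_\<alpha>[OF card_b inj into mult] by blast
  define A where "A = {(c, d). c \<in> K \<and> d \<in> K \<and> (\<sigma> = id \<or> d = 0)}"
  have A: "A = K \<times> K" using assms(1) by (auto simp: A_def)
  define f where "f z = \<phi> (fst z) + \<phi> (snd z) * \<beta>" for z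
  have "inj_on f A" unfolding A f_def using CHAR_b inj into \<beta>_outside by (rule inj_on_K_adjoin)
  moreover have "card A = CARD('b)" using card_K card_b by (simp add: A card_cartesian_product mult_2 power_add)
  ultimately have "bij_betw f A UNIV" by (rule bij_betw_UNIV_if_card_eq)
  then have "iso_onto_field (L ` A) SM (f \<circ> inv L)"
  proof (rule iso_onto_field_image[OF bij_is_inj[OF bij_L], where mul' = "qmult \<alpha>"])
    show "L x + L y = L (x + y)" for x y by (rule L_add)
    show "SM (L x) (L y) = L (qmult \<alpha> x y)" if "x \<in> A" "y \<in> A" for x y
      using that by (simp add: A_def SM_nucleus)
    fix x y assume "x \<in> A" "y \<in> A"
    then obtain a b c d where xy: "x = (a, b)" "y = (c, d)" and in_K: "a \<in> K" "b \<in> K" "c \<in> K" "d \<in> K"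
      by (auto simp: A)
    have fixed: "(a * c) ^ (p ^ l) = a * c" "(\<alpha> * b) ^ (p ^ l) = \<alpha> * b"
      "(\<alpha> * b * d) ^ (p ^ l) = \<alpha> * b * d" "(a * d) ^ (p ^ l) = a * d" "(b * c) ^ (p ^ l) = b * c"
      using in_K \<alpha>_fixed by (simp_all add: power_mult_distrib)
    show "f (x + y) = f x + f y" using in_K by (simp add: xy f_def add algebra_simps)
    have "f (qmult \<alpha> x y) = \<phi> a * \<phi> c + \<phi> \<alpha> * \<phi> b * \<phi> d + (\<phi> a * \<phi> d + \<phi> b * \<phi> c) * \<beta>"
      using in_K \<alpha>_fixed fixed by (simp add: xy f_def qmult_def add mult)
    also have "\<dots> = f x * f y" using \<beta> by (simp add: xy f_def algebra_simps power2_eq_square)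
    finally show "f (qmult \<alpha> x y) = f x * f y" .
  qed
  then show ?thesis unfolding middle_nucleus_eq A_def[symmetric] by blast
qed

end

theorem theorem2:
  fixes p m k r :: nat and \<alpha> :: "'a::{field,finite}"
  assumes "prime p" and "odd p"
    and "CARD('a) = p ^ m"
    and "0 < k" and "k \<le> m div 2"
    and "odd (m div gcd m k)"
    and "\<alpha> ^ (p ^ gcd m k) = \<alpha>" and "\<alpha> \<noteq> 0"
    and "\<not> (\<exists>y. \<alpha> = y ^ 2)"
    and "r \<le> m div 2"
  shows "((\<lambda>x::'a. x ^ (p ^ r)) = id \<longrightarrow> CARD('b::{field,finite}) = p ^ (2 * gcd m k) \<longrightarrow>
            (\<exists>f :: 'a \<times> 'a \<Rightarrow> 'b. iso_onto_field
               (middle_nucleus (smul p k \<alpha> (\<lambda>x. x ^ (p ^ r))))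
               (smul p k \<alpha> (\<lambda>x. x ^ (p ^ r))) f))
       \<and> ((\<lambda>x::'a. x ^ (p ^ r)) \<noteq> id \<longrightarrow> CARD('c::{field,finite}) = p ^ gcd m k \<longrightarrow>
            (\<exists>g :: 'a \<times> 'a \<Rightarrow> 'c. iso_onto_field
               (middle_nucleus (smul p k \<alpha> (\<lambda>x. x ^ (p ^ r))))
               (smul p k \<alpha> (\<lambda>x. x ^ (p ^ r))) g))"
proof -
  interpret semifield_Sk_sigma p m k r \<alpha> using assms by unfold_locales
  show ?thesis using middle_nucleus_iso_if_sigma_id middle_nucleus_iso_if_sigma_not_id by blast
qed

end
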